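(* Let $T>0$, $0\leq t<T$, $\tau=T-t$, $r\geq 0$, $\sigma>0$, $n\in\mathbb{N}$, and let $S_t>0$ and $M_t>0$ with $S_t\geq M_t$. Put $u=e^{\sigma\sqrt{\tau/n}}$, $d=u^{-1}$, $q=\frac{u-e^{-r\tau/n}}{u-d}$ and $j_0=\frac{\log(S_t/M_t)}{\sigma\sqrt{\tau/n}}$. Let $\Lambda^{j_0}_{j,k,n}$ and $J$ be as in the context, and define the discrete (Cheuk–Vorst) price of the European lookback call with floating strike at time $t$ by \[ C^{fl}_n(t) = S_t \sum_{j\in J} (1-u^{-j})\sum_{k=0}^n \Lambda^{j_0}_{j,k,n}\, q^k(1-q)^{n-k}. \] Then $C^{fl}_n(t) = S_t(V_1-V_2+V_3)$, where, with $k_{\min}=n-\lfloor \frac{n+j_0}{2}\rfloor$ and $k_{\max}=k_{\max}(j)=\lfloor\frac{n-\lfloor j_0\rfloor-1+j}{2}\rfloor$, \begin{align*} V_1&=\sum_{k=k_{\min}}^{n}(1-u^{n-j_0-2k}) \binom{n}{k}q^k(1-q)^{n-k},\\ V_2&=\sum_{k=k_{\min}}^{n-\lfloor j_0\rfloor-1}(1-u^{n-j_0-2k})\binom{n}{k+\lfloor j_0\rfloor+1} q^k(1-q)^{n-k},\\ V_3&=\sum_{j=0}^{n-\lfloor j_0\rfloor-1}(1-u^{-j}) \sum_{k=j}^{k_{\max}}\Big[\binom{n}{k-j}-\binom{n}{k-j-1}\Big] q^k(1-q)^{n-k}. \end{align*}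
   Context: Here $S_t$ is the current price of the underlying and $M_t=\min_{t^*\leq t}S_{t^*}$ its running minimum since emission. Consider the directed graph with initial node $(0,j_0)$ in which, from each node $(m,j_m)$ with $0\leq m<n$, there are exactly two edges: an "up" edge to $(m+1,j_m+1)$ and a "down" edge to $(m+1,\max(j_m-1,0))$. $\Lambda^{j_0}_{j,k,n}$ is the number of paths from $(0,j_0)$ to $(n,j)$ with exactly $k$ up jumps, and $J$ is the set of levels $j$ such that $(n,j)$ is reachable from $(0,j_0)$. $\lfloor x\rfloor$ is the integer part; binomial coefficients $\binom{n}{i}$ are $0$ for $i<0$ or $i>n$. *)

theory Defs
  imports Complex_Main
begin

text \<open>Level reached after following a path (list of moves, True = up, False = down)
  from level j: up goes to j+1, down goes to max (j-1) 0.  Levels are real since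
  the initial level j_0 need not be an integer.\<close>
fun end_level :: "real \<Rightarrow> bool list \<Rightarrow> real" where
  "end_level j [] = j"
| "end_level j (b # bs) = end_level (if b then j + 1 else max (j - 1) 0) bs"

definition Lambda :: "real \<Rightarrow> real \<Rightarrow> nat \<Rightarrow> nat \<Rightarrow> nat" where
  "Lambda j0 j k n = card {p. length p = n \<and> length (filter id p) = k \<and> end_level j0 p = j}"

definition reach_levels :: "real \<Rightarrow> nat \<Rightarrow> real set" where
  "reach_levels j0 n = {j. \<exists>p. length p = n \<and> end_level j0 p = j}"

definition binom :: "nat \<Rightarrow> int \<Rightarrow> real" where
  "binom n i = (if i < 0 \<or> i > int n then 0 else real (n choose nat i))"

definition C_fl :: "real \<Rightarrow> real \<Rightarrow> real \<Rightarrow> real \<Rightarrow> nat \<Rightarrow> real" where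
  "C_fl S u q j0 n = S * (\<Sum>j\<in>reach_levels j0 n. (1 - u powr (- j)) *
       (\<Sum>k=0..n. real (Lambda j0 j k (n::nat)) * q ^ k * (1 - q) ^ (n - k)))"

end

theory Submission
  imports Defs
begin

text \<open>A path with \<open>k\<close> up moves, run without the reflection at \<open>0\<close>, ends at \<open>j\<^sub>0 + 2k - n\<close>;
  if \<open>D\<close> is the depth by which it falls below its starting point, the reflected path ends at
  \<open>2k - n + max j\<^sub>0 D\<close>. Paths with \<open>D \<le> \<lfloor>j\<^sub>0\<rfloor>\<close> never feel the barrier; by the reflection
  principle there are \<open>C(n,k) - C(n,k+\<lfloor>j\<^sub>0\<rfloor>+1)\<close> of them, which gives \<open>V\<^sub>1 - V\<^sub>2\<close>. The other
  paths end at the integer level \<open>j = 2k - n + D\<close>, and for fixed \<open>k\<close> and \<open>j\<close> there are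
  \<open>C(n,k-j) - C(n,k-j-1)\<close> of them, which gives \<open>V\<^sub>3\<close>.\<close>

definition up_moves :: "bool list \<Rightarrow> nat" where
  "up_moves p = length (filter id p)"

lemma up_moves_Nil [simp]: "up_moves [] = 0"
  by (simp add: up_moves_def)

lemma up_moves_Cons [simp]: "up_moves (b # bs) = (if b then Suc (up_moves bs) else up_moves bs)"
  by (simp add: up_moves_def)

lemma up_moves_le_length: "up_moves p \<le> length p"
  by (simp add: up_moves_def)

text \<open>The depth by which the unreflected walk along \<open>p\<close> falls below its starting level.\<close>
fun max_drop :: "bool list \<Rightarrow> nat" where
  "max_drop [] = 0"
| "max_drop (b # bs) = (if b then max_drop bs - 1 else max_drop bs + 1)"

lemma max_drop_lower_bound: "int (length p) - 2 * int (up_moves p) \<le> int (max_drop p)"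
  by (induction p) auto

lemma max_drop_add_up_moves_le: "max_drop p + up_moves p \<le> length p"
  by (induction p) auto

lemma end_level_eq_max_drop:
  "a \<ge> 0 \<Longrightarrow> end_level a p = real (2 * up_moves p) - real (length p) + max a (real (max_drop p))"
proof (induction p arbitrary: a)
  case Nil
  then show ?case by simp
next
  case (Cons b bs)
  show ?case
  proof (cases b)
    case True
    then have "end_level a (b # bs) =
        real (2 * up_moves bs) - real (length bs) + max (a + 1) (real (max_drop bs))"
      using Cons by simp
    then show ?thesis using True Cons.prems by (auto simp: of_nat_diff max_def)
  next
    case False
    then have "end_level a (b # bs) =
        real (2 * up_moves bs) - real (length bs) + max (max (a - 1) 0) (real (max_drop bs))"
      using Cons by simp
    then show ?thesis using False by (auto simp: max_def)
  qed
qed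

lemma finite_paths: "finite {p :: bool list. length p = n \<and> P p}"
  by (rule finite_subset[OF _ finite_lists_length_eq[OF finite_UNIV, of n]]) auto

lemma card_paths_Suc:
  "card {p. length p = Suc n \<and> P p} =
     card {p. length p = n \<and> P (True # p)} + card {p. length p = n \<and> P (False # p)}"
proof -
  have "{p. length p = Suc n \<and> P p} =
      Cons True ` {p. length p = n \<and> P (True # p)} \<union> Cons False ` {p. length p = n \<and> P (False # p)}"
  proof (intro equalityI subsetI)
    fix x assume "x \<in> {p. length p = Suc n \<and> P p}"
    then obtain b xs where "x = b # xs" "length xs = n" "P (b # xs)"
      by (auto simp: length_Suc_conv)
    then show "x \<in> Cons True ` {p. length p = n \<and> P (True # p)} \<union>
        Cons False ` {p. length p = n \<and> P (False # p)}"
      by (cases b) auto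
  qed auto
  then show ?thesis
    by (simp only:) (subst card_Un_disjoint, auto simp: finite_paths card_image)
qed

lemma binom_Suc: "binom (Suc n) i = binom n (i - 1) + binom n i"
proof -
  consider "i \<le> 0" | "0 < i \<and> i \<le> int n" | "i = int n + 1" | "i > int n + 1"
    by linarith
  then show ?thesis
  proof cases
    case 2
    then have "nat i = Suc (nat (i - 1))" "nat (i - 1) < n" by auto
    then show ?thesis using 2 by (simp add: binom_def)
  next
    case 3
    then have "nat i = Suc n" by simp
    then show ?thesis using 3 by (simp add: binom_def)
  qed (auto simp: binom_def)
qed

lemma binom_reflect: "binom n (int n - i) = binom n i"
proof (cases "i < 0 \<or> i > int n")
  case False
  then obtain m where "i = int m" "m \<le> n"
    by (metis linorder_not_le nat_0_le nat_le_iff)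
  then have "nat (int n - i) = n - m" by simp
  then show ?thesis using \<open>i = int m\<close> \<open>m \<le> n\<close> by (simp add: binom_def binomial_symmetric[symmetric])
qed (auto simp: binom_def)

text \<open>Reflection principle: reflecting a path that falls more than \<open>h\<close> below its start in the
  level \<open>-h-1\<close>, up to its first visit there, gives a bijection onto the paths with \<open>k+h+1\<close> down
  moves.\<close>
lemma card_paths_max_drop_le:
  assumes "h \<ge> -1"
  shows "real (card {p. length p = n \<and> int (up_moves p) = k \<and> int (max_drop p) \<le> h}) =
    (if - h \<le> 2 * k - int n then binom n k - binom n (k + h + 1) else 0)"
  using assms
proof (induction n arbitrary: k h)
  case 0
  show ?case
  proof (cases "h = -1")
    case False
    then have "{p. length p = 0 \<and> int (up_moves p) = k \<and> int (max_drop p) \<le> h} =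
        (if k = 0 then {[]} else {})"
      using 0 by auto
    then show ?thesis using 0 False by (auto simp: binom_def)
  qed (simp add: binom_def)
next
  case (Suc n)
  show ?case
  proof (cases "h = -1")
    case False
    then have h: "h \<ge> 0" using Suc.prems by simp
    have "{p. length p = n \<and> int (up_moves (True # p)) = k \<and> int (max_drop (True # p)) \<le> h} =
        {p. length p = n \<and> int (up_moves p) = k - 1 \<and> int (max_drop p) \<le> h + 1}"
      "{p. length p = n \<and> int (up_moves (False # p)) = k \<and> int (max_drop (False # p)) \<le> h} =
        {p. length p = n \<and> int (up_moves p) = k \<and> int (max_drop p) \<le> h - 1}"
      using h by auto
    then have "real (card {p. length p = Suc n \<and> int (up_moves p) = k \<and> int (max_drop p) \<le> h}) =
        real (card {p. length p = n \<and> int (up_moves p) = k - 1 \<and> int (max_drop p) \<le> h + 1}) +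
        real (card {p. length p = n \<and> int (up_moves p) = k \<and> int (max_drop p) \<le> h - 1})"
      using card_paths_Suc[of n "\<lambda>p. int (up_moves p) = k \<and> int (max_drop p) \<le> h"] by simp
    also have "\<dots> =
        (if - h - 1 \<le> 2 * k - int n - 2 then binom n (k - 1) - binom n (k + h + 1) else 0) +
        (if - h + 1 \<le> 2 * k - int n then binom n k - binom n (k + h) else 0)"
      using Suc.IH[of "h + 1" "k - 1"] Suc.IH[of "h - 1" k] h by (simp add: algebra_simps)
    also have "\<dots> = (if - h \<le> 2 * k - int (Suc n) then
        binom (Suc n) k - binom (Suc n) (k + h + 1) else 0)"
      using binom_Suc[of n k] binom_Suc[of n "k + h + 1"] by (simp add: algebra_simps)
    finally show ?thesis .
  qed (simp add: binom_def)
qed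

lemma card_paths_max_drop_eq:
  assumes "0 \<le> j" and "1 \<le> int n + j - 2 * k"
  shows "real (card {p. length p = n \<and> int (up_moves p) = k \<and> int (max_drop p) = int n + j - 2 * k}) =
    binom n (k - j) - binom n (k - j - 1)"
proof -
  define D where "D = int n + j - 2 * k"
  let ?A = "{p. length p = n \<and> int (up_moves p) = k \<and> int (max_drop p) \<le> D}"
  let ?B = "{p. length p = n \<and> int (up_moves p) = k \<and> int (max_drop p) \<le> D - 1}"
  have "{p. length p = n \<and> int (up_moves p) = k \<and> int (max_drop p) = D} = ?A - ?B"
    by auto
  moreover have "?B \<subseteq> ?A" by auto
  ultimately have "real (card {p. length p = n \<and> int (up_moves p) = k \<and> int (max_drop p) = D}) =
      real (card ?A) - real (card ?B)"
    by (simp add: card_Diff_subset finite_paths card_mono of_nat_diff)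
  moreover have "binom n (k + D) = binom n (k - j)" "binom n (k + D + 1) = binom n (k - j - 1)"
    using binom_reflect[of n "k - j"] binom_reflect[of n "k - j - 1"]
    unfolding D_def by (simp_all add: algebra_simps)
  moreover have "real (card ?A) = binom n k - binom n (k + D + 1)"
    using card_paths_max_drop_le[of D n k] assms unfolding D_def by simp
  moreover have "real (card ?B) = (if j = 0 then 0 else binom n k - binom n (k + D))"
  proof -
    have "- (D - 1) \<le> 2 * k - int n \<longleftrightarrow> j \<noteq> 0" using assms(1) unfolding D_def by auto
    moreover have "D \<ge> 1" using assms(2) unfolding D_def .
    ultimately show ?thesis using card_paths_max_drop_le[of "D - 1" n k] by simp
  qed
  ultimately have "real (card {p. length p = n \<and> int (up_moves p) = k \<and> int (max_drop p) = D}) =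
      binom n (k - j) - binom n (k - j - 1)"
    by auto
  then show ?thesis unfolding D_def .
qed

definition path_weight :: "real \<Rightarrow> real \<Rightarrow> real \<Rightarrow> nat \<Rightarrow> bool list \<Rightarrow> real" where
  "path_weight u q a n p = (1 - u powr (- end_level a p)) *
     q powi int (up_moves p) * (1 - q) powi (int n - int (up_moves p))"

lemma C_fl_eq_sum_path_weight:
  "C_fl S u q a n = S * sum (path_weight u q a n) {p. length p = n}"
proof -
  let ?P = "{p :: bool list. length p = n}"
  let ?c = "\<lambda>k::nat. q ^ k * (1 - q) ^ (n - k)"
  have level: "(1 - u powr (- j)) * (\<Sum>k=0..n. real (Lambda a j k n) * ?c k) =
      sum (path_weight u q a n) {p \<in> ?P. end_level a p = j}" for j
  proof -
    have "(\<Sum>k=0..n. real (Lambda a j k n) * ?c k) =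
        (\<Sum>k=0..n. \<Sum>p\<in>{p \<in> {p \<in> ?P. end_level a p = j}. up_moves p = k}. ?c (up_moves p))"
    proof (rule sum.cong[OF refl])
      fix k
      have "{p. length p = n \<and> length (filter id p) = k \<and> end_level a p = j} =
          {p \<in> {p \<in> ?P. end_level a p = j}. up_moves p = k}"
        by (auto simp: up_moves_def)
      then show "real (Lambda a j k n) * ?c k =
          (\<Sum>p\<in>{p \<in> {p \<in> ?P. end_level a p = j}. up_moves p = k}. ?c (up_moves p))"
        by (simp add: Lambda_def)
    qed
    also have "\<dots> = (\<Sum>p\<in>{p \<in> ?P. end_level a p = j}. ?c (up_moves p))"
      by (rule sum.group) (auto simp: finite_paths up_moves_le_length)
    moreover have "(1 - u powr (- j)) * ?c (up_moves p) = path_weight u q a n p"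
      if "p \<in> {p \<in> ?P. end_level a p = j}" for p
    proof -
      have "int n - int (up_moves p) = int (n - up_moves p)"
        using that up_moves_le_length[of p] by simp
      then have "(1 - q) powi (int n - int (up_moves p)) = (1 - q) ^ (n - up_moves p)"
        by (metis power_int_of_nat)
      then show ?thesis using that by (simp add: path_weight_def mult.assoc)
    qed
    ultimately show ?thesis by (simp add: sum_distrib_left)
  qed
  have "reach_levels a n = end_level a ` ?P"
    by (auto simp: reach_levels_def)
  then have "(\<Sum>j\<in>reach_levels a n. sum (path_weight u q a n) {p \<in> ?P. end_level a p = j}) =
      sum (path_weight u q a n) ?P"
    using finite_paths[of n "\<lambda>_. True"] by (simp only:) (rule sum.group, auto)
  then show ?thesis
    unfolding C_fl_def by (simp add: level mult.assoc)
qed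

lemma sum_path_weight_unreflected:
  assumes "a \<ge> 0"
  shows "sum (path_weight u q a n) {p. length p = n \<and> int (max_drop p) \<le> \<lfloor>a\<rfloor>} =
    (\<Sum>k\<in>{0..int n}. (if - \<lfloor>a\<rfloor> \<le> 2 * k - int n then binom n k - binom n (k + \<lfloor>a\<rfloor> + 1) else 0) *
       ((1 - u powr (real n - a - 2 * real_of_int k)) * q powi k * (1 - q) powi (int n - k)))"
proof -
  have "- 1 \<le> \<lfloor>a\<rfloor>" using assms by (simp add: le_floor_iff)
  let ?P = "{p. length p = n \<and> int (max_drop p) \<le> \<lfloor>a\<rfloor>}"
  let ?P\<^sub>k = "\<lambda>k. {p \<in> ?P. int (up_moves p) = k}"
  have "sum (path_weight u q a n) ?P = (\<Sum>k\<in>{0..int n}. sum (path_weight u q a n) (?P\<^sub>k k))"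
    by (rule sum.group[symmetric]) (auto simp: finite_paths up_moves_le_length)
  also have "\<dots> = (\<Sum>k\<in>{0..int n}. real (card (?P\<^sub>k k)) *
      ((1 - u powr (real n - a - 2 * real_of_int k)) * q powi k * (1 - q) powi (int n - k)))"
  proof (intro sum.cong refl)
    fix k
    have "path_weight u q a n p =
        (1 - u powr (real n - a - 2 * real_of_int k)) * q powi k * (1 - q) powi (int n - k)"
      if "p \<in> ?P\<^sub>k k" for p
    proof -
      have "int (max_drop p) \<le> \<lfloor>a\<rfloor>" using that by simp
      then have "real (max_drop p) \<le> a" by (metis le_floor_iff of_int_of_nat_eq)
      then have "end_level a p = real (2 * up_moves p) - real n + a"
        using end_level_eq_max_drop[OF assms, of p] that by simp
      then have "- end_level a p = real n - a - 2 * real_of_int k" using that by simp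
      then show ?thesis using that by (simp add: path_weight_def)
    qed
    then show "sum (path_weight u q a n) (?P\<^sub>k k) = real (card (?P\<^sub>k k)) *
        ((1 - u powr (real n - a - 2 * real_of_int k)) * q powi k * (1 - q) powi (int n - k))"
      by simp
  qed
  finally show ?thesis
    using card_paths_max_drop_le[OF \<open>- 1 \<le> \<lfloor>a\<rfloor>\<close>, of n] by (simp add: conj_ac)
qed

lemma sum_binom_barrier_split:
  fixes a :: real and H :: "int \<Rightarrow> real"
  assumes "a \<ge> 0"
  shows "(\<Sum>k\<in>{0..int n}. (if - \<lfloor>a\<rfloor> \<le> 2 * k - int n then binom n k - binom n (k + \<lfloor>a\<rfloor> + 1) else 0) * H k) =
    (\<Sum>k\<in>{int n - \<lfloor>(real n + a) / 2\<rfloor>..int n}. binom n k * H k) -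
    (\<Sum>k\<in>{int n - \<lfloor>(real n + a) / 2\<rfloor>..int n - \<lfloor>a\<rfloor> - 1}. binom n (k + \<lfloor>a\<rfloor> + 1) * H k)"
proof -
  define f where "f = \<lfloor>a\<rfloor>"
  define k\<^sub>0 where "k\<^sub>0 = int n - \<lfloor>(real n + a) / 2\<rfloor>"
  have k\<^sub>0_le_iff: "k\<^sub>0 \<le> k \<longleftrightarrow> - f \<le> 2 * k - int n" for k
  proof -
    have "k\<^sub>0 \<le> k \<longleftrightarrow> real_of_int (int n - k) \<le> (real n + a) / 2"
      unfolding k\<^sub>0_def le_floor_iff[symmetric] by linarith
    also have "\<dots> \<longleftrightarrow> real_of_int (int n - 2 * k) \<le> a"
      by (simp add: field_simps)
    also have "\<dots> \<longleftrightarrow> int n - 2 * k \<le> f"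
      unfolding f_def by (rule le_floor_iff[symmetric])
    finally show ?thesis by linarith
  qed
  have "f \<ge> 0" using assms unfolding f_def by simp
  have V\<^sub>1: "(\<Sum>k\<in>{k\<^sub>0..int n}. binom n k * H k) =
      (\<Sum>k\<in>{0..int n}. if - f \<le> 2 * k - int n then binom n k * H k else 0)"
    by (rule sum.mono_neutral_cong) (auto simp: k\<^sub>0_le_iff binom_def)
  have V\<^sub>2: "(\<Sum>k\<in>{k\<^sub>0..int n - f - 1}. binom n (k + f + 1) * H k) =
      (\<Sum>k\<in>{0..int n}. if - f \<le> 2 * k - int n then binom n (k + f + 1) * H k else 0)"
    using \<open>f \<ge> 0\<close> by (intro sum.mono_neutral_cong) (auto simp: k\<^sub>0_le_iff binom_def)
  have "(\<Sum>k\<in>{0..int n}. (if - f \<le> 2 * k - int n then binom n k - binom n (k + f + 1) else 0) * H k) =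
      (\<Sum>k\<in>{0..int n}. (if - f \<le> 2 * k - int n then binom n k * H k else 0) -
        (if - f \<le> 2 * k - int n then binom n (k + f + 1) * H k else 0))"
    by (intro sum.cong refl) (simp add: algebra_simps)
  then show ?thesis
    unfolding sum_subtractf V\<^sub>1[symmetric] V\<^sub>2[symmetric] unfolding f_def k\<^sub>0_def .
qed

lemma sum_path_weight_reflected_level:
  assumes "a \<ge> 0" and "0 \<le> j" and "\<lfloor>a\<rfloor> < int n + j - 2 * k"
  shows "sum (path_weight u q a n)
      {p. length p = n \<and> int (up_moves p) = k \<and> int (max_drop p) = int n + j - 2 * k} =
    (binom n (k - j) - binom n (k - j - 1)) *
      ((1 - u powr (- real_of_int j)) * q powi k * (1 - q) powi (int n - k))"
proof -
  let ?P = "{p. length p = n \<and> int (up_moves p) = k \<and> int (max_drop p) = int n + j - 2 * k}"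
  have "path_weight u q a n p = (1 - u powr (- real_of_int j)) * q powi k * (1 - q) powi (int n - k)"
    if p: "p \<in> ?P" for p
  proof -
    have "a < real_of_int (\<lfloor>a\<rfloor> + 1)" by linarith
    also have "\<dots> \<le> real (max_drop p)" using p assms(3) by simp
    finally have "end_level a p = real (2 * up_moves p) - real n + real (max_drop p)"
      using end_level_eq_max_drop[OF assms(1), of p] p by simp
    also have "\<dots> = real_of_int j" using p by simp
    finally show ?thesis using p by (simp add: path_weight_def)
  qed
  then have "sum (path_weight u q a n) ?P =
      real (card ?P) * ((1 - u powr (- real_of_int j)) * q powi k * (1 - q) powi (int n - k))"
    by simp
  moreover have "1 \<le> int n + j - 2 * k" using assms by linarith
  ultimately show ?thesis
    using card_paths_max_drop_eq[OF assms(2)] by simp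
qed

lemma sum_path_weight_reflected:
  assumes "a \<ge> 0"
  shows "sum (path_weight u q a n) {p. length p = n \<and> \<lfloor>a\<rfloor> < int (max_drop p)} =
    (\<Sum>j\<in>{0..int n - \<lfloor>a\<rfloor> - 1}. (1 - u powr (- real_of_int j)) *
       (\<Sum>k\<in>{j..\<lfloor>(real n - real_of_int \<lfloor>a\<rfloor> - 1 + real_of_int j) / 2\<rfloor>}.
          (binom n (k - j) - binom n (k - j - 1)) * q powi k * (1 - q) powi (int n - k)))"
proof -
  define f where "f = \<lfloor>a\<rfloor>"
  define k\<^sub>1 where "k\<^sub>1 = (\<lambda>j. \<lfloor>(real n - real_of_int f - 1 + real_of_int j) / 2\<rfloor>)"
  define P where "P = {p. length p = n \<and> f < int (max_drop p)}"
  define T where "T = Sigma {0..int n - f - 1} (\<lambda>j. {j..k\<^sub>1 j})"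
  define level_ups where
    "level_ups = (\<lambda>p. (2 * int (up_moves p) - int n + int (max_drop p), int (up_moves p)))"
  have le_k\<^sub>1_iff: "k \<le> k\<^sub>1 j \<longleftrightarrow> 2 * k \<le> int n - f - 1 + j" for j k
  proof -
    have "k \<le> k\<^sub>1 j \<longleftrightarrow> real_of_int (2 * k) \<le> real_of_int (int n - f - 1 + j)"
      unfolding k\<^sub>1_def le_floor_iff by (simp add: mult.commute)
    then show ?thesis by (simp only: of_int_le_iff)
  qed
  have "sum (path_weight u q a n) P = (\<Sum>x\<in>T. sum (path_weight u q a n) {p\<in>P. level_ups p = x})"
  proof (rule sum.group[symmetric])
    show "level_ups ` P \<subseteq> T"
    proof
      fix x assume "x \<in> level_ups ` P"
      then obtain p where p: "p \<in> P" "x = level_ups p" by auto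
      then show "x \<in> T"
        using max_drop_lower_bound[of p] max_drop_add_up_moves_le[of p]
        unfolding P_def T_def level_ups_def by (auto simp: le_k\<^sub>1_iff)
    qed
  qed (auto simp: P_def T_def finite_paths)
  also have "\<dots> = (\<Sum>(j, k)\<in>T. (binom n (k - j) - binom n (k - j - 1)) *
      ((1 - u powr (- real_of_int j)) * q powi k * (1 - q) powi (int n - k)))"
  proof (intro sum.cong refl)
    fix x assume "x \<in> T"
    then obtain j k where x: "x = (j, k)" "(j, k) \<in> T" by (cases x) auto
    then have "0 \<le> j" "f < int n + j - 2 * k" unfolding T_def by (auto simp: le_k\<^sub>1_iff)
    moreover have "{p\<in>P. level_ups p = (j, k)} =
        {p. length p = n \<and> int (up_moves p) = k \<and> int (max_drop p) = int n + j - 2 * k}"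
      using \<open>f < int n + j - 2 * k\<close> unfolding P_def level_ups_def by auto
    ultimately show "sum (path_weight u q a n) {p\<in>P. level_ups p = x} =
        (case x of (j, k) \<Rightarrow> (binom n (k - j) - binom n (k - j - 1)) *
          ((1 - u powr (- real_of_int j)) * q powi k * (1 - q) powi (int n - k)))"
      using sum_path_weight_reflected_level[OF assms] unfolding f_def x by simp
  qed
  also have "\<dots> = (\<Sum>j\<in>{0..int n - f - 1}. \<Sum>k\<in>{j..k\<^sub>1 j}. (binom n (k - j) - binom n (k - j - 1)) *
      ((1 - u powr (- real_of_int j)) * q powi k * (1 - q) powi (int n - k)))"
    unfolding T_def by (rule sum.Sigma[symmetric]) auto
  also have "\<dots> = (\<Sum>j\<in>{0..int n - f - 1}. (1 - u powr (- real_of_int j)) *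
       (\<Sum>k\<in>{j..k\<^sub>1 j}. (binom n (k - j) - binom n (k - j - 1)) * q powi k * (1 - q) powi (int n - k)))"
    by (simp add: sum_distrib_left algebra_simps)
  finally show ?thesis unfolding P_def f_def k\<^sub>1_def .
qed

lemma C_fl_decomposition:
  fixes a u q S :: real
  assumes "a \<ge> 0"
  shows "C_fl S u q a n = S *
    ((\<Sum>k\<in>{int n - \<lfloor>(real n + a) / 2\<rfloor>..int n}. (1 - u powr (real n - a - 2 * real_of_int k)) *
        binom n k * q powi k * (1 - q) powi (int n - k)) -
     (\<Sum>k\<in>{int n - \<lfloor>(real n + a) / 2\<rfloor>..int n - \<lfloor>a\<rfloor> - 1}. (1 - u powr (real n - a - 2 * real_of_int k)) *
        binom n (k + \<lfloor>a\<rfloor> + 1) * q powi k * (1 - q) powi (int n - k)) +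
     (\<Sum>j\<in>{0..int n - \<lfloor>a\<rfloor> - 1}. (1 - u powr (- real_of_int j)) *
        (\<Sum>k\<in>{j..\<lfloor>(real n - real_of_int \<lfloor>a\<rfloor> - 1 + real_of_int j) / 2\<rfloor>}.
          (binom n (k - j) - binom n (k - j - 1)) * q powi k * (1 - q) powi (int n - k))))"
proof -
  define H where "H k = (1 - u powr (real n - a - 2 * real_of_int k)) * q powi k * (1 - q) powi (int n - k)"
    for k :: int
  have "{p. length p = n} =
      {p. length p = n \<and> int (max_drop p) \<le> \<lfloor>a\<rfloor>} \<union> {p. length p = n \<and> \<lfloor>a\<rfloor> < int (max_drop p)}"
    by auto
  then have "sum (path_weight u q a n) {p. length p = n} =
      sum (path_weight u q a n) {p. length p = n \<and> int (max_drop p) \<le> \<lfloor>a\<rfloor>} +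
      sum (path_weight u q a n) {p. length p = n \<and> \<lfloor>a\<rfloor> < int (max_drop p)}"
    by (simp add: sum.union_disjoint finite_paths disjoint_iff)
  then show ?thesis
    using C_fl_eq_sum_path_weight sum_path_weight_unreflected[OF assms]
      sum_binom_barrier_split[OF assms, of n H] sum_path_weight_reflected[OF assms]
    by (simp add: H_def mult_ac)
qed

theorem theorem2p2:
  fixes T t r \<sigma> S M :: real and n :: nat
  assumes "T > 0" and "0 \<le> t" and "t < T" and "r \<ge> 0" and "\<sigma> > 0" and "n \<ge> 1"
    and "S > 0" and "M > 0" and "S \<ge> M"
  shows "let \<tau> = T - t;
             u = exp (\<sigma> * sqrt (\<tau> / real n));
             d = inverse u;
             q = (u - exp (- r * \<tau> / real n)) / (u - d);
             j0 = ln (S / M) / (\<sigma> * sqrt (\<tau> / real n));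
             kmin = int n - \<lfloor>(real n + j0) / 2\<rfloor>;
             kmax = (\<lambda>j::int. \<lfloor>(real n - real_of_int \<lfloor>j0\<rfloor> - 1 + real_of_int j) / 2\<rfloor>);
             V1 = (\<Sum>k\<in>{kmin..int n}. (1 - u powr (real n - j0 - 2 * real_of_int k)) *
                     binom n k * q powi k * (1 - q) powi (int n - k));
             V2 = (\<Sum>k\<in>{kmin..int n - \<lfloor>j0\<rfloor> - 1}. (1 - u powr (real n - j0 - 2 * real_of_int k)) *
                     binom n (k + \<lfloor>j0\<rfloor> + 1) * q powi k * (1 - q) powi (int n - k));
             V3 = (\<Sum>j\<in>{0..int n - \<lfloor>j0\<rfloor> - 1}. (1 - u powr (- real_of_int j)) *
                     (\<Sum>k\<in>{j..kmax j}. (binom n (k - j) - binom n (k - j - 1)) *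
                        q powi k * (1 - q) powi (int n - k)))
         in C_fl S u q j0 n = S * (V1 - V2 + V3)"
proof -
  have "\<sigma> * sqrt ((T - t) / real n) > 0"
    using assms by simp
  moreover have "ln (S / M) \<ge> 0"
    using assms by simp
  ultimately have "ln (S / M) / (\<sigma> * sqrt ((T - t) / real n)) \<ge> 0"
    by simp
  then show ?thesis
    unfolding Let_def by (rule C_fl_decomposition)
qed

end
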